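(* Let $v$ be periodic with $0\le\hat v\in\ell^1(\Lambda^* )$, $\hat v(0)>0$, and let $c_0\in(0,1]$. There exist constants $C,\eta_0>0$ (depending only on $c_0$ and $v$) such that for all $\eta\ge\eta_0$, all $\beta,\mu$ with $c_0\eta^{-2/3}\le\beta\le c_0^{-1}\eta^{-2/3}$ and $-c_0^{-1}\eta^{2/3}\le\mu\le c_0^{-1}$, and every state $\Gamma$ on $\mathscr F$, $$\mathcal G(\Gamma)\ge\Phi^{\mathrm{id}}_+(\beta,\widetilde\mu)-\frac{(\mu-\widetilde\mu)^2\eta}{2\hat v(0)}+\frac{\hat v(0)}{2\eta}\mathrm{Tr}\Big[\Big(\mathcal N-\frac{(\mu-\widetilde\mu+\frac{v(0)}{2\eta})\eta}{\hat v(0)}\Big)^2\Gamma\Big]-C\eta^{2/3}\ln\eta.$$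
   Context: Setting: $\Lambda=[0,1]^3$ torus, $\Lambda^*=2\pi\mathbb{Z}^3$, $\Lambda^*_+=\Lambda^*\setminus\{0\}$, $\hat v(p)=\int_\Lambda v(x)e^{-ip\cdot x}dx$, $v(0)=\sum_p\hat v(p)$. $\mathscr F$ is the bosonic Fock space over $L^2(\Lambda)$, $a_p,a_p^*$ annihilation/creation operators of $\varphi_p(x)=e^{ip\cdot x}$, $\mathcal N=\sum_pa_p^*a_p$. $\mathcal H_\eta=\sum_{p}p^2a_p^*a_p+\frac{1}{2\eta}\sum_{p,u,w\in\Lambda^*}\hat v(p)a^*_{u+p}a^*_{w-p}a_ua_w$. A state is a nonnegative trace-one operator on $\mathscr F$; the grand potential functional is $\mathcal G(\Gamma)=\mathrm{Tr}[(\mathcal H_\eta-\mu\mathcal N)\Gamma]+\beta^{-1}\mathrm{Tr}[\Gamma\ln\Gamma]$. $\Phi^{\mathrm{id}}_+(\beta,\nu)=\beta^{-1}\sum_{p\in\Lambda^*_+}\ln(1-e^{-\beta(p^2-\nu)})$. The effective chemical potential $\widetilde\mu\in(-\infty,0)$ is the unique solution of $\sum_{p\in\Lambda^*}\frac{1}{e^{\beta(p^2-\widetilde\mu)}-1}=\frac{(\mu-\widetilde\mu)\eta}{\hat v(0)}$. *)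

theory Defs
  imports "HOL-Analysis.Analysis"
begin

text \<open>Momenta: \<Lambda>* = 2\<pi> Z^3, a momentum p = 2\<pi> k is represented by k :: int \<times> int \<times> int.
  Fock space over L^2([0,1]^3) is represented in the occupation-number (plane wave) basis:
  a configuration is m :: mom \<Rightarrow> nat with finite support, and a Fock vector is a
  square-summable function from configurations to complex numbers vanishing off
  finitely-supported configurations.\<close>

type_synonym mom = "int \<times> int \<times> int"
type_synonym config = "mom \<Rightarrow> nat"
type_synonym fvec = "config \<Rightarrow> complex"

definition psq :: "mom \<Rightarrow> real" where
  "psq k = (2 * pi)^2 * (real_of_int (fst k)^2 + real_of_int (fst (snd k))^2 + real_of_int (snd (snd k))^2)"

definition supp_cfg :: "config \<Rightarrow> mom set" where
  "supp_cfg m = {k. m k \<noteq> 0}"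

definition numop :: "config \<Rightarrow> real" where
  "numop m = real (\<Sum>k\<in>supp_cfg m. m k)"

definition kin :: "config \<Rightarrow> real" where
  "kin m = (\<Sum>k\<in>supp_cfg m. psq k * real (m k))"

definition fock_vec :: "fvec \<Rightarrow> bool" where
  "fock_vec \<psi> \<longleftrightarrow> (\<forall>m. \<not> finite (supp_cfg m) \<longrightarrow> \<psi> m = 0)
      \<and> (\<lambda>m. (cmod (\<psi> m))^2) summable_on UNIV"

definition fock_inner :: "fvec \<Rightarrow> fvec \<Rightarrow> complex" where
  "fock_inner \<phi> \<psi> = (\<Sum>\<^sub>\<infinity>m. cnj (\<phi> m) * \<psi> m)"

definition ann :: "mom \<Rightarrow> fvec \<Rightarrow> fvec" where
  "ann k \<psi> m = complex_of_real (sqrt (real (m k + 1))) * \<psi> (m(k := m k + 1))"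

definition cre :: "mom \<Rightarrow> fvec \<Rightarrow> fvec" where
  "cre k \<psi> m = (if m k = 0 then 0
       else complex_of_real (sqrt (real (m k))) * \<psi> (m(k := m k - 1)))"

definition dens_op :: "mom \<Rightarrow> fvec \<Rightarrow> fvec" where
  "dens_op p \<psi> m = (\<Sum>w\<in>{w. m (w - p) \<noteq> 0}. cre (w - p) (ann w \<psi>) m)"

text \<open>A state, given by its spectral decomposition \<Gamma> = \<Sum>_j lam_j |\<psi>_j\<rangle>\<langle>\<psi>_j|.\<close>
definition is_state :: "(nat \<Rightarrow> real) \<Rightarrow> (nat \<Rightarrow> fvec) \<Rightarrow> bool" where
  "is_state lam \<psi> \<longleftrightarrow> (\<forall>j. lam j \<ge> 0) \<and> (lam has_sum 1) UNIV
     \<and> (\<forall>j. fock_vec (\<psi> j))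
     \<and> (\<forall>i j. fock_inner (\<psi> i) (\<psi> j) = (if i = j then 1 else 0))"

definition v_zero :: "(mom \<Rightarrow> real) \<Rightarrow> real" where
  "v_zero vh = (\<Sum>\<^sub>\<infinity>p. vh p)"

text \<open>Using \<Sum>_{p,u,w} vh(p) a^*_{u+p} a^*_{w-p} a_u a_w = \<Sum>_p vh(p) (\<rho>_p \<rho>_p^* - N) with
  \<rho>_p^* = dens_op p, the quadratic form of H_\<eta> - \<mu> N at \<psi> is
  \<Sum>_m |\<psi> m|^2 diag(m) + (1/(2\<eta>)) \<Sum>_p vh(p) \<parallel>dens_op p \<psi>\<parallel>^2.\<close>
definition diag_coef :: "(mom \<Rightarrow> real) \<Rightarrow> real \<Rightarrow> real \<Rightarrow> config \<Rightarrow> real" where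
  "diag_coef vh \<eta> \<mu> m = kin m - (\<mu> + v_zero vh / (2 * \<eta>)) * numop m"

definition energy_pos :: "(mom \<Rightarrow> real) \<Rightarrow> real \<Rightarrow> real \<Rightarrow> (nat \<Rightarrow> real) \<Rightarrow> (nat \<Rightarrow> fvec) \<Rightarrow> ennreal" where
  "energy_pos vh \<eta> \<mu> lam \<psi> =
     (\<Sum>\<^sub>\<infinity>j. ennreal (lam j) *
        ((\<Sum>\<^sub>\<infinity>m. ennreal ((cmod (\<psi> j m))^2 * max (diag_coef vh \<eta> \<mu> m) 0))
         + ennreal (1 / (2 * \<eta>)) *
           (\<Sum>\<^sub>\<infinity>p. ennreal (vh p) * (\<Sum>\<^sub>\<infinity>m. ennreal ((cmod (dens_op p (\<psi> j) m))^2)))))"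

definition energy_neg :: "(mom \<Rightarrow> real) \<Rightarrow> real \<Rightarrow> real \<Rightarrow> (nat \<Rightarrow> real) \<Rightarrow> (nat \<Rightarrow> fvec) \<Rightarrow> ennreal" where
  "energy_neg vh \<eta> \<mu> lam \<psi> =
     (\<Sum>\<^sub>\<infinity>j. ennreal (lam j) *
        (\<Sum>\<^sub>\<infinity>m. ennreal ((cmod (\<psi> j m))^2 * max (- diag_coef vh \<eta> \<mu> m) 0)))"

text \<open>Tr[(H_\<eta> - \<mu> N) \<Gamma>] in (-\<infinity>, \<infinity>]; it is +\<infinity> whenever the positive part diverges
  (the operator is bounded below).\<close>
definition energy :: "(mom \<Rightarrow> real) \<Rightarrow> real \<Rightarrow> real \<Rightarrow> (nat \<Rightarrow> real) \<Rightarrow> (nat \<Rightarrow> fvec) \<Rightarrow> ereal" where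
  "energy vh \<eta> \<mu> lam \<psi> =
     (if energy_pos vh \<eta> \<mu> lam \<psi> = top then \<infinity>
      else enn2ereal (energy_pos vh \<eta> \<mu> lam \<psi>) - enn2ereal (energy_neg vh \<eta> \<mu> lam \<psi>))"

text \<open>Tr[\<Gamma> ln \<Gamma>] = \<Sum>_j lam_j ln lam_j \<in> [-\<infinity>, 0]\<close>
definition ent_term :: "(nat \<Rightarrow> real) \<Rightarrow> ereal" where
  "ent_term lam = - enn2ereal (\<Sum>\<^sub>\<infinity>j. ennreal (- (lam j * ln (lam j))))"

definition grand_pot :: "(mom \<Rightarrow> real) \<Rightarrow> real \<Rightarrow> real \<Rightarrow> real \<Rightarrow> (nat \<Rightarrow> real) \<Rightarrow> (nat \<Rightarrow> fvec) \<Rightarrow> ereal" where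
  "grand_pot vh \<eta> \<mu> \<beta> lam \<psi> =
     (if energy vh \<eta> \<mu> lam \<psi> = \<infinity> then \<infinity>
      else energy vh \<eta> \<mu> lam \<psi> + ereal (1 / \<beta>) * ent_term lam)"

definition num_sq_trace :: "real \<Rightarrow> (nat \<Rightarrow> real) \<Rightarrow> (nat \<Rightarrow> fvec) \<Rightarrow> ennreal" where
  "num_sq_trace c lam \<psi> =
     (\<Sum>\<^sub>\<infinity>j. ennreal (lam j) * (\<Sum>\<^sub>\<infinity>m. ennreal ((cmod (\<psi> j m))^2 * (numop m - c)^2)))"

definition Phi_id_plus :: "real \<Rightarrow> real \<Rightarrow> real" where
  "Phi_id_plus \<beta> \<nu> = (1 / \<beta>) * (\<Sum>\<^sub>\<infinity>p\<in>UNIV - {0}. ln (1 - exp (- \<beta> * (psq p - \<nu>))))"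

definition is_eff_chem_pot :: "(mom \<Rightarrow> real) \<Rightarrow> real \<Rightarrow> real \<Rightarrow> real \<Rightarrow> real \<Rightarrow> bool" where
  "is_eff_chem_pot vh \<eta> \<mu> \<beta> mt \<longleftrightarrow> mt < 0 \<and>
     (\<Sum>\<^sub>\<infinity>p. 1 / (exp (\<beta> * (psq p - mt)) - 1)) = (\<mu> - mt) * \<eta> / vh 0"

end

theory Submission
  imports Defs "HOL-Real_Asymp.Real_Asymp"
begin

text \<open>
  Write \<open>mt = - x\<close>, \<open>\<kappa> = vh 0 / (2 \<eta>)\<close> and \<open>c = (\<mu> + x + v_zero vh / (2 \<eta>)) \<eta> / vh 0\<close>.
  In the occupation-number basis the Hamiltonian's diagonal part and the \<open>p = 0\<close> term of the
  interaction (where \<open>\<rho>\<^sub>0 = N\<close>) give, after completing the square in \<open>N\<close>,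
  \<open>H - \<mu> N \<ge> K + x N + \<kappa> (N - c)\<^sup>2 - \<kappa> c\<^sup>2\<close>, \<open>K\<close> the kinetic energy.
  The Gibbs variational principle bounds \<open>Tr[(K + x N) \<Gamma>] - S(\<Gamma>) / \<beta>\<close> below by the grand
  potential of the ideal Bose gas at chemical potential \<open>- x\<close>, which is \<open>Phi_id_plus \<beta> mt\<close>
  plus the zero-mode term \<open>ln (1 - exp (- \<beta> x)) / \<beta>\<close>.
  The remainder consists of that zero-mode term and the \<open>v_zero vh\<close> parts of \<open>\<kappa> c\<^sup>2\<close>.
  The equation defining \<open>mt\<close> bounds the zero-mode occupation by \<open>(\<mu> + x) \<eta> / vh 0\<close> and,
  since \<open>\<beta> \<ge> c0 \<eta> powr (-2/3)\<close>, forces \<open>x = O(\<eta> powr (2/3) ln \<eta>)\<close>, so the remainder is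
  \<open>O(\<eta> powr (2/3) ln \<eta>)\<close>.
\<close>

section \<open>Sums of nonnegative extended reals\<close>

text \<open>The library rule \<open>summable_on_ennreal\<close> is stated for an unconstrained codomain and
  therefore never applies.\<close>

lemma summable_on_ennreal_fun [simp]: "(f :: 'a \<Rightarrow> ennreal) summable_on A"
  by (rule nonneg_summable_on_complete) simp

lemma has_sum_sum_fun:
  fixes f :: "'i \<Rightarrow> 'a \<Rightarrow> 'b::topological_comm_monoid_add"
  assumes "finite I" "\<And>i. i \<in> I \<Longrightarrow> (f i has_sum s i) A"
  shows "((\<lambda>x. \<Sum>i\<in>I. f i x) has_sum (\<Sum>i\<in>I. s i)) A"
  using assms by (induction I rule: finite_induct) (auto intro: has_sum_add)

lemma infsum_ennreal_eq_SUP: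
  fixes f :: "'a \<Rightarrow> ennreal"
  shows "infsum f A = (SUP F\<in>{F. finite F \<and> F \<subseteq> A}. sum f F)"
  by (rule nonneg_infsum_complete) simp

lemma infsum_cmult_right_ennreal:
  fixes f :: "'a \<Rightarrow> ennreal"
  shows "(\<Sum>\<^sub>\<infinity>x\<in>A. c * f x) = c * infsum f A"
  by (simp add: infsum_ennreal_eq_SUP SUP_mult_left_ennreal sum_distrib_left)

lemma infsum_cmult_left_ennreal:
  fixes f :: "'a \<Rightarrow> ennreal"
  shows "(\<Sum>\<^sub>\<infinity>x\<in>A. f x * c) = infsum f A * c"
  using infsum_cmult_right_ennreal[of c f A] by (simp add: mult.commute)

lemma infsum_add_ennreal:
  fixes f g :: "'a \<Rightarrow> ennreal"
  shows "(\<Sum>\<^sub>\<infinity>x\<in>A. f x + g x) = infsum f A + infsum g A"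
  by (rule infsum_add) simp_all

lemma infsum_mono_ennreal:
  fixes f g :: "'a \<Rightarrow> ennreal"
  assumes "\<And>x. x \<in> A \<Longrightarrow> f x \<le> g x"
  shows "infsum f A \<le> infsum g A"
  by (rule infsum_mono) (simp_all add: assms)

lemma finite_sum_le_infsum_ennreal:
  fixes f :: "'a \<Rightarrow> ennreal"
  assumes "finite F" "F \<subseteq> A"
  shows "sum f F \<le> infsum f A"
  unfolding infsum_ennreal_eq_SUP by (rule SUP_upper) (use assms in auto)

lemma infsum_swap_ennreal:
  fixes f :: "'a \<Rightarrow> 'b \<Rightarrow> ennreal"
  shows "(\<Sum>\<^sub>\<infinity>x\<in>A. \<Sum>\<^sub>\<infinity>y\<in>B. f x y) = (\<Sum>\<^sub>\<infinity>y\<in>B. \<Sum>\<^sub>\<infinity>x\<in>A. f x y)"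
proof -
  have le: "(\<Sum>\<^sub>\<infinity>x\<in>A. \<Sum>\<^sub>\<infinity>y\<in>B. g x y) \<le> (\<Sum>\<^sub>\<infinity>y\<in>B. \<Sum>\<^sub>\<infinity>x\<in>A. g x y)"
    for A :: "'c set" and B :: "'d set" and g :: "'c \<Rightarrow> 'd \<Rightarrow> ennreal"
    unfolding infsum_ennreal_eq_SUP[of "\<lambda>x. \<Sum>\<^sub>\<infinity>y\<in>B. g x y"]
  proof (rule SUP_least)
    fix F assume F: "F \<in> {F. finite F \<and> F \<subseteq> A}"
    have "(\<Sum>x\<in>F. \<Sum>\<^sub>\<infinity>y\<in>B. g x y) = (\<Sum>\<^sub>\<infinity>y\<in>B. \<Sum>x\<in>F. g x y)"
      using F by (intro infsumI [symmetric] has_sum_sum_fun) auto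
    also have "\<dots> \<le> (\<Sum>\<^sub>\<infinity>y\<in>B. \<Sum>\<^sub>\<infinity>x\<in>A. g x y)"
      using F by (intro infsum_mono_ennreal finite_sum_le_infsum_ennreal) auto
    finally show "(\<Sum>x\<in>F. \<Sum>\<^sub>\<infinity>y\<in>B. g x y) \<le> \<dots>" .
  qed
  show ?thesis by (rule antisym) (rule le)+
qed

lemma ennreal_infsum:
  fixes f :: "'a \<Rightarrow> real"
  assumes "f summable_on A" "\<And>x. x \<in> A \<Longrightarrow> f x \<ge> 0"
  shows "ennreal (infsum f A) = (\<Sum>\<^sub>\<infinity>x\<in>A. ennreal (f x))"
proof -
  have "ennreal (infsum f A) = (SUP F\<in>{F. finite F \<and> F \<subseteq> A}. ennreal (sum f F))"
    by (rule infsum_nonneg_is_SUPREMUM_ennreal[OF assms])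
  also have "\<dots> = (SUP F\<in>{F. finite F \<and> F \<subseteq> A}. (\<Sum>x\<in>F. ennreal (f x)))"
    by (rule SUP_cong) (auto intro!: sum_ennreal[symmetric] assms)
  finally show ?thesis by (simp add: infsum_ennreal_eq_SUP)
qed

section \<open>States on Fock space\<close>

lemma cnj_mult_self_eq: "cnj z * z = complex_of_real ((cmod z)^2)"
  by (metis complex_norm_square mult.commute)

lemma fock_inner_summable:
  assumes "fock_vec \<phi>" "fock_vec \<psi>"
  shows "(\<lambda>m. cnj (\<phi> m) * \<psi> m) summable_on UNIV"
proof -
  have "(\<lambda>m. (cmod (\<phi> m))^2 + (cmod (\<psi> m))^2) summable_on UNIV"
    using assms by (intro summable_on_add) (auto simp: fock_vec_def)
  moreover have "norm (cnj (\<phi> m) * \<psi> m) \<le> (cmod (\<phi> m))^2 + (cmod (\<psi> m))^2" for m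
    using sum_squares_bound[of "cmod (\<phi> m)" "cmod (\<psi> m)"]
      mult_nonneg_nonneg[OF norm_ge_zero norm_ge_zero, of "\<phi> m" "\<psi> m"]
    unfolding norm_mult complex_mod_cnj by linarith
  ultimately have "(\<lambda>m. norm (cnj (\<phi> m) * \<psi> m)) summable_on UNIV"
    by (rule summable_on_comparison_test) simp_all
  then show ?thesis by (rule abs_summable_summable)
qed

lemma has_sum_norm_sq_orthonormal_comb:
  assumes fock: "\<And>j. fock_vec (\<psi> j)"
    and orth: "\<And>i j. fock_inner (\<psi> i) (\<psi> j) = (if i = j then 1 else 0)"
    and J: "finite J"
  shows "((\<lambda>m. (cmod (\<Sum>j\<in>J. a j * \<psi> j m))^2) has_sum (\<Sum>j\<in>J. (cmod (a j))^2)) UNIV"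
proof -
  have "((\<lambda>m. cnj (a i) * a j * (cnj (\<psi> i m) * \<psi> j m))
      has_sum cnj (a i) * a j * fock_inner (\<psi> i) (\<psi> j)) UNIV" for i j
    unfolding fock_inner_def by (intro has_sum_cmult_right has_sum_infsum fock_inner_summable fock)
  then have "((\<lambda>m. \<Sum>i\<in>J. \<Sum>j\<in>J. cnj (a i) * a j * (cnj (\<psi> i m) * \<psi> j m))
      has_sum (\<Sum>i\<in>J. \<Sum>j\<in>J. cnj (a i) * a j * fock_inner (\<psi> i) (\<psi> j))) UNIV"
    by (intro has_sum_sum_fun J)
  moreover have "(\<Sum>i\<in>J. \<Sum>j\<in>J. cnj (a i) * a j * fock_inner (\<psi> i) (\<psi> j))
      = complex_of_real (\<Sum>j\<in>J. (cmod (a j))^2)"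
    using J by (simp add: orth if_distrib cnj_mult_self_eq cong: if_cong)
  moreover have "(\<Sum>i\<in>J. \<Sum>j\<in>J. cnj (a i) * a j * (cnj (\<psi> i m) * \<psi> j m))
      = complex_of_real ((cmod (\<Sum>j\<in>J. a j * \<psi> j m))^2)" for m
  proof -
    have "(\<Sum>i\<in>J. \<Sum>j\<in>J. cnj (a i) * a j * (cnj (\<psi> i m) * \<psi> j m))
        = cnj (\<Sum>j\<in>J. a j * \<psi> j m) * (\<Sum>j\<in>J. a j * \<psi> j m)"
      unfolding cnj_sum complex_cnj_mult sum_product by (simp only: ac_simps)
    then show ?thesis by (simp only: cnj_mult_self_eq)
  qed
  ultimately show ?thesis by (simp only: has_sum_of_real_iff)
qed

lemma state_weight_nonneg: "is_state lam \<psi> \<Longrightarrow> 0 \<le> lam j"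
  by (simp add: is_state_def)

lemma state_weight_le_one:
  assumes "is_state lam \<psi>"
  shows "lam j \<le> 1"
proof -
  have "(lam has_sum 1) UNIV" "\<And>j. 0 \<le> lam j" using assms by (auto simp: is_state_def)
  then show ?thesis
    using finite_sum_le_infsum[of lam UNIV "{j}"] by (auto simp: has_sum_iff)
qed

lemma state_weights_sum_ennreal:
  assumes "is_state lam \<psi>"
  shows "(\<Sum>\<^sub>\<infinity>j. ennreal (lam j)) = 1"
proof -
  have "(lam has_sum 1) UNIV" "\<And>j. 0 \<le> lam j" using assms by (auto simp: is_state_def)
  then show ?thesis using ennreal_infsum[of lam UNIV] by (auto simp: has_sum_iff)
qed

lemma state_vector_normalized_ennreal:
  assumes "is_state lam \<psi>"
  shows "(\<Sum>\<^sub>\<infinity>m. ennreal ((cmod (\<psi> j m))^2)) = 1"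
proof -
  have "((\<lambda>m. (cmod (\<psi> j m))^2) has_sum (cmod 1)^2) UNIV"
    using has_sum_norm_sq_orthonormal_comb[of \<psi> "{j}" "\<lambda>_. 1"] assms
    by (simp add: is_state_def)
  then show ?thesis using ennreal_infsum[of "\<lambda>m. (cmod (\<psi> j m))^2" UNIV]
    by (simp add: has_sum_iff)
qed

lemma state_vector_finite_support:
  "is_state lam \<psi> \<Longrightarrow> \<psi> j m \<noteq> 0 \<Longrightarrow> finite (supp_cfg m)"
  by (auto simp: is_state_def fock_vec_def)

text \<open>Bessel's inequality: \<open>u\<close> is the projection of the basis vector \<open>m\<close> onto the span of
  finitely many \<open>\<psi> j\<close>, and \<open>u m = \<parallel>u\<parallel>\<^sup>2 = s\<close> forces \<open>s\<^sup>2 \<le> s\<close>.\<close>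

lemma state_bessel_inequality:
  assumes "is_state lam \<psi>"
  shows "(\<Sum>\<^sub>\<infinity>j. ennreal ((cmod (\<psi> j m))^2)) \<le> 1"
  unfolding infsum_ennreal_eq_SUP
proof (rule SUP_least)
  fix J :: "nat set" assume "J \<in> {F. finite F \<and> F \<subseteq> UNIV}"
  then have J: "finite J" by simp
  define s where "s = (\<Sum>j\<in>J. (cmod (\<psi> j m))^2)"
  define u where "u m' = (\<Sum>j\<in>J. cnj (\<psi> j m) * \<psi> j m')" for m'
  have "((\<lambda>m'. (cmod (u m'))^2) has_sum s) UNIV"
    using has_sum_norm_sq_orthonormal_comb[of \<psi> J "\<lambda>j. cnj (\<psi> j m)"] assms J
    by (simp add: is_state_def u_def s_def)
  then have "(cmod (u m))^2 \<le> s"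
    using finite_sum_le_infsum[of "\<lambda>m'. (cmod (u m'))^2" UNIV "{m}"] by (auto simp: has_sum_iff)
  moreover have "u m = complex_of_real s"
    by (simp add: u_def s_def cnj_mult_self_eq del: of_real_power)
  moreover have "s \<ge> 0" by (simp add: s_def sum_nonneg)
  ultimately have "s * s \<le> s * 1" by (simp add: power2_eq_square)
  then have "s \<le> 1"
  proof (cases "s = 0")
    case False
    with \<open>s \<ge> 0\<close> have "0 < s" by simp
    with \<open>s * s \<le> s * 1\<close> show ?thesis by (simp only: mult_le_cancel_left_pos)
  qed simp
  then show "(\<Sum>j\<in>J. ennreal ((cmod (\<psi> j m))^2)) \<le> 1"
    by (simp add: s_def sum_ennreal)
qed

lemma dens_op_zero:
  assumes "fock_vec \<psi>"
  shows "dens_op 0 \<psi> m = complex_of_real (numop m) * \<psi> m"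
proof (cases "finite (supp_cfg m)")
  case True
  have "cre w (ann w \<psi>) m = complex_of_real (real (m w)) * \<psi> m" if "m w \<noteq> 0" for w
  proof -
    have "(m(w := m w - 1))(w := m w - 1 + 1) = m" using that by simp
    then have "cre w (ann w \<psi>) m
        = complex_of_real (sqrt (real (m w))) * complex_of_real (sqrt (real (m w))) * \<psi> m"
      using that by (simp add: cre_def ann_def)
    then show ?thesis by (simp flip: of_real_mult)
  qed
  then have "dens_op 0 \<psi> m = (\<Sum>w\<in>supp_cfg m. complex_of_real (real (m w)) * \<psi> m)"
    by (simp add: dens_op_def supp_cfg_def)
  then show ?thesis by (simp add: numop_def sum_distrib_right)
next
  case False
  then show ?thesis using assms by (simp add: dens_op_def fock_vec_def supp_cfg_def)
qed

section \<open>Lattice sums for the free Bose gas\<close>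

lemma psq_nonneg: "psq k \<ge> 0"
  by (simp add: psq_def)

lemma psq_zero: "psq 0 = 0"
  by (simp add: psq_def zero_prod_def)

lemma sum_power_le_geometric:
  fixes r :: real
  assumes "0 \<le> r" "r < 1" "finite I"
  shows "(\<Sum>i\<in>I. r ^ i) \<le> 1 / (1 - r)"
proof -
  have "(\<Sum>i\<in>I. r ^ i) \<le> (\<Sum>i. r ^ i)"
    by (rule sum_le_suminf) (use assms in \<open>auto intro: summable_geometric\<close>)
  also have "\<dots> = 1 / (1 - r)" using assms by (simp add: suminf_geometric)
  finally show ?thesis .
qed

lemma inverse_exp_minus_one_le:
  fixes y :: real
  assumes "y > 0"
  shows "1 / (exp y - 1) \<le> 1 / y"
proof -
  have "y \<le> exp y - 1" using exp_ge_add_one_self[of y] by linarith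
  then show ?thesis using assms by (intro divide_left_mono) auto
qed

lemma inverse_exp_minus_one_le_two_exp:
  fixes y :: real
  assumes "2 \<le> exp y"
  shows "1 / (exp y - 1) \<le> 2 * exp (- y)"
proof -
  have "1 / (exp y - 1) \<le> 1 / (exp y / 2)" using assms by (intro frac_le) auto
  then show ?thesis by (simp add: exp_minus field_simps)
qed

lemma inverse_one_minus_exp_neg:
  fixes y :: real
  assumes "y > 0"
  shows "1 / (1 - exp (- y)) = 1 + 1 / (exp y - 1)"
proof -
  have "exp y > 1" using assms by simp
  then show ?thesis by (simp add: exp_minus field_simps)
qed

lemma sum_exp_neg_square_int_le:
  fixes b :: real and I :: "int set"
  assumes "b > 0" "finite I"
  shows "(\<Sum>n\<in>I. exp (- b * of_int n ^ 2)) \<le> 2 * (1 + 1 / b)"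
proof -
  define q where "q = exp (- b)"
  have "0 \<le> q" "q < 1" using assms by (auto simp: q_def)
  have half: "(\<Sum>n\<in>J. q ^ nat n) \<le> 1 + 1 / b" if "finite J" "J \<subseteq> {0..}" for J :: "int set"
  proof -
    have "inj_on nat J" using that(2) by (metis atLeast_iff eq_nat_nat_iff inj_onI subsetD)
    then have "(\<Sum>n\<in>J. q ^ nat n) = (\<Sum>k\<in>nat ` J. q ^ k)" by (simp add: sum.reindex)
    also have "\<dots> \<le> 1 / (1 - q)"
      using \<open>0 \<le> q\<close> \<open>q < 1\<close> that(1) by (intro sum_power_le_geometric) auto
    also have "\<dots> = 1 + 1 / (exp b - 1)" unfolding q_def by (rule inverse_one_minus_exp_neg[OF assms(1)])
    also have "\<dots> \<le> 1 + 1 / b" using inverse_exp_minus_one_le[OF assms(1)] by simp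
    finally show ?thesis .
  qed
  have "exp (- b * of_int n ^ 2) \<le> q ^ nat \<bar>n\<bar>" for n :: int
  proof -
    have "\<bar>n\<bar> \<le> n ^ 2"
    proof (cases "n = 0")
      case False
      then have "\<bar>n\<bar> * 1 \<le> \<bar>n\<bar> * \<bar>n\<bar>" by (intro mult_left_mono) auto
      then show ?thesis by (simp add: power2_eq_square abs_mult_self_eq)
    qed simp
    then have "- b * of_int n ^ 2 \<le> - b * of_int \<bar>n\<bar>"
      using assms(1) by (simp flip: of_int_power of_int_le_iff)
    then show ?thesis by (simp add: q_def flip: exp_of_nat_mult) (simp add: mult.commute)
  qed
  then have "(\<Sum>n\<in>I. exp (- b * of_int n ^ 2)) \<le> (\<Sum>n\<in>I. q ^ nat \<bar>n\<bar>)"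
    by (rule sum_mono)
  also have "\<dots> = (\<Sum>n\<in>I. if 0 \<le> n then q ^ nat n else q ^ nat (- n))"
    by (rule sum.cong) auto
  also have "\<dots> = (\<Sum>n\<in>I \<inter> {0..}. q ^ nat n) + (\<Sum>n\<in>I \<inter> - {0..}. q ^ nat (- n))"
    using sum.If_cases[OF assms(2)] by (simp add: atLeast_def)
  also have "(\<Sum>n\<in>I \<inter> - {0..}. q ^ nat (- n)) = (\<Sum>n\<in>uminus ` (I \<inter> - {0..}). q ^ nat n)"
    by (subst sum.reindex) (auto intro: inj_onI)
  also have "(\<Sum>n\<in>I \<inter> {0..}. q ^ nat n) + \<dots> \<le> (1 + 1 / b) + (1 + 1 / b)"
    using assms(2) by (intro add_mono half) auto
  finally show ?thesis by simp
qed

lemma sum_exp_neg_psq_le: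
  assumes "\<beta> > 0" "finite F"
  shows "(\<Sum>k\<in>F. exp (- \<beta> * psq k)) \<le> (2 * (1 + 1 / \<beta>)) ^ 3"
proof -
  define b where "b = (2 * pi)^2 * \<beta>"
  define f where "f n = exp (- b * of_int n ^ 2)" for n :: int
  define I where "I = fst ` F \<union> (fst \<circ> snd) ` F \<union> (snd \<circ> snd) ` F"
  have "1 \<le> pi^2" using pi_gt3 by (intro one_le_power) simp
  then have "b \<ge> \<beta>" using assms(1) by (simp add: b_def)
  then have b: "b > 0" "1 / b \<le> 1 / \<beta>" using assms(1) by (auto intro: divide_left_mono)
  have I: "finite I" using assms(2) by (simp add: I_def)
  have f: "0 \<le> sum f I" "sum f I \<le> 2 * (1 + 1 / \<beta>)"
    using sum_exp_neg_square_int_le[OF b(1) I] b(2) by (auto simp: f_def intro: sum_nonneg)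
  have "exp (- \<beta> * psq k) = f (fst k) * f (fst (snd k)) * f (snd (snd k))" for k
    by (simp add: f_def b_def psq_def algebra_simps flip: exp_add)
  then have "(\<Sum>k\<in>F. exp (- \<beta> * psq k)) = (\<Sum>k\<in>F. f (fst k) * f (fst (snd k)) * f (snd (snd k)))"
    by simp
  also have "\<dots> \<le> (\<Sum>k\<in>I \<times> I \<times> I. f (fst k) * f (fst (snd k)) * f (snd (snd k)))"
  proof (rule sum_mono2)
    show "F \<subseteq> I \<times> I \<times> I" by (force simp: I_def)
  qed (simp_all add: I f_def)
  also have "\<dots> = (\<Sum>i\<in>I. \<Sum>j\<in>I. \<Sum>l\<in>I. f i * f j * f l)"
    by (simp add: sum.cartesian_product split_def)
  also have "\<dots> = sum f I * (sum f I * sum f I)"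
    by (simp only: sum_distrib_right) (simp only: sum_distrib_left mult.assoc)
  also have "\<dots> \<le> (2 * (1 + 1 / \<beta>)) ^ 3"
    using power_mono[OF f(2) f(1), of 3] by (simp add: power3_eq_cube)
  finally show ?thesis .
qed

lemma exp_neg_psq_summable:
  assumes "\<beta> > 0"
  shows "(\<lambda>k. exp (- \<beta> * psq k)) summable_on UNIV"
  by (rule nonneg_bdd_above_summable_on)
    (use sum_exp_neg_psq_le[OF assms] in \<open>auto intro!: bdd_aboveI\<close>)

lemma infsum_exp_neg_psq_le:
  assumes "\<beta> > 0"
  shows "(\<Sum>\<^sub>\<infinity>k. exp (- \<beta> * psq k)) \<le> (2 * (1 + 1 / \<beta>)) ^ 3"
  by (rule infsum_le_finite_sums[OF exp_neg_psq_summable[OF assms]])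
    (rule sum_exp_neg_psq_le[OF assms])

lemma inverse_exp_minus_one_shift_le:
  fixes a b :: real
  assumes "a \<ge> 0" "b > 0"
  shows "1 / (exp (a + b) - 1) \<le> exp (- a) / (exp b - 1)"
proof -
  have pos: "0 < exp a * (exp b - 1)" using assms(2) by simp
  have "exp a * (exp b - 1) \<le> exp (a + b) - 1"
    using assms(1) by (simp add: exp_add algebra_simps)
  then have "1 / (exp (a + b) - 1) \<le> 1 / (exp a * (exp b - 1))"
    using pos by (intro frac_le) auto
  also have "\<dots> = exp (- a) / (exp b - 1)" by (simp add: exp_minus field_simps)
  finally show ?thesis .
qed

lemma bose_occupation_bounds:
  assumes "\<beta> > 0" "x > 0"
  defines "n \<equiv> \<lambda>p. 1 / (exp (\<beta> * (psq p + x)) - 1)"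
  shows bose_occupation_summable: "n summable_on UNIV"
    and bose_occupation_ge_zero_mode: "1 / (exp (\<beta> * x) - 1) \<le> (\<Sum>\<^sub>\<infinity>p. n p)"
    and bose_occupation_le: "(\<Sum>\<^sub>\<infinity>p. n p) \<le> (2 * (1 + 1 / \<beta>)) ^ 3 / (exp (\<beta> * x) - 1)"
proof -
  have bx: "\<beta> * x > 0" using assms by simp
  have n_nonneg: "0 \<le> n p" for p
    using assms psq_nonneg[of p] by (simp add: n_def add_pos_nonneg)
  have n_le: "n p \<le> exp (- \<beta> * psq p) / (exp (\<beta> * x) - 1)" for p
    using inverse_exp_minus_one_shift_le[of "\<beta> * psq p" "\<beta> * x"] assms(1) bx psq_nonneg[of p]
    by (simp add: n_def distrib_left)
  define d where "d p = exp (- \<beta> * psq p) / (exp (\<beta> * x) - 1)" for p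
  have d_sum: "(d has_sum (\<Sum>\<^sub>\<infinity>p. exp (- \<beta> * psq p)) / (exp (\<beta> * x) - 1)) UNIV"
    unfolding d_def by (intro has_sum_divide_const has_sum_infsum exp_neg_psq_summable assms(1))
  then have dom: "d summable_on UNIV" by (auto simp: summable_on_def)
  show summable: "n summable_on UNIV"
    by (rule summable_on_comparison_test[OF dom]) (use n_le n_nonneg in \<open>auto simp: d_def\<close>)
  show "1 / (exp (\<beta> * x) - 1) \<le> (\<Sum>\<^sub>\<infinity>p. n p)"
    using finite_sum_le_infsum[OF summable, of "{0}"] n_nonneg by (simp add: n_def psq_zero)
  have "(\<Sum>\<^sub>\<infinity>p. n p) \<le> (\<Sum>\<^sub>\<infinity>p. d p)"
    by (rule infsum_mono[OF summable dom]) (use n_le in \<open>simp add: d_def\<close>)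
  also have "\<dots> = (\<Sum>\<^sub>\<infinity>p. exp (- \<beta> * psq p)) / (exp (\<beta> * x) - 1)"
    using d_sum by (rule infsumI)
  also have "\<dots> \<le> (2 * (1 + 1 / \<beta>)) ^ 3 / (exp (\<beta> * x) - 1)"
    using bx by (intro divide_right_mono infsum_exp_neg_psq_le assms(1)) simp
  finally show "(\<Sum>\<^sub>\<infinity>p. n p) \<le> (2 * (1 + 1 / \<beta>)) ^ 3 / (exp (\<beta> * x) - 1)" .
qed

lemma neg_ln_one_minus_exp_neg:
  fixes y :: real
  assumes "y > 0"
  shows "- ln (1 - exp (- y)) = ln (1 + 1 / (exp y - 1))"
proof -
  have "0 < 1 - exp (- y)" using assms by simp
  then have "- ln (1 - exp (- y)) = ln (1 / (1 - exp (- y)))" by (simp add: ln_div)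
  then show ?thesis by (simp only: inverse_one_minus_exp_neg[OF assms])
qed

lemma log_partition:
  assumes "\<beta> > 0" "x > 0"
  defines "l \<equiv> \<lambda>k. - ln (1 - exp (- \<beta> * (psq k + x)))"
  shows log_partition_summable: "l summable_on UNIV"
    and log_partition_eq: "(\<Sum>\<^sub>\<infinity>k. l k) = - ln (1 - exp (- \<beta> * x)) - \<beta> * Phi_id_plus \<beta> (- x)"
proof -
  have pos: "\<beta> * (psq k + x) > 0" for k using assms psq_nonneg[of k] by (simp add: add_nonneg_pos)
  have l_eq: "l k = ln (1 + 1 / (exp (\<beta> * (psq k + x)) - 1))" for k
    using neg_ln_one_minus_exp_neg[OF pos] by (simp add: l_def)
  have "0 \<le> l k" "l k \<le> 1 / (exp (\<beta> * (psq k + x)) - 1)" for k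
    using pos[of k] by (auto simp: l_eq intro: ln_add_one_self_le_self)
  then show summable: "l summable_on UNIV"
    by (intro summable_on_comparison_test[OF bose_occupation_summable[OF assms(1,2)]])
  have "(\<Sum>\<^sub>\<infinity>k. l k) = l 0 + (\<Sum>\<^sub>\<infinity>k\<in>UNIV - {0}. l k)"
    using infsum_insert[OF summable_on_subset_banach[OF summable], of "UNIV - {0}" 0]
    by (simp add: insert_absorb)
  also have "(\<Sum>\<^sub>\<infinity>k\<in>UNIV - {0}. l k) = - \<beta> * Phi_id_plus \<beta> (- x)"
    using assms(1) by (simp add: l_def Phi_id_plus_def infsum_uminus)
  finally show "(\<Sum>\<^sub>\<infinity>k. l k) = - ln (1 - exp (- \<beta> * x)) - \<beta> * Phi_id_plus \<beta> (- x)"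
    by (simp add: l_def psq_zero)
qed

section \<open>The Gibbs variational inequality\<close>

lemma sum_prod_power_le_prod_geometric:
  fixes r :: "'k \<Rightarrow> real"
  assumes r: "\<And>k. 0 \<le> r k" "\<And>k. r k < 1"
    and F: "finite F" and M: "finite M" "\<And>m k. m \<in> M \<Longrightarrow> k \<notin> F \<Longrightarrow> m k = 0"
  shows "(\<Sum>m\<in>M. \<Prod>k\<in>F. r k ^ m k) \<le> (\<Prod>k\<in>F. 1 / (1 - r k))"
proof -
  define B where "B k = (\<lambda>m. m k) ` M" for k
  have "inj_on (\<lambda>m. restrict m F) M"
  proof (rule inj_onI)
    fix m m' assume "m \<in> M" "m' \<in> M" "restrict m F = restrict m' F"
    then show "m = m'" using M(2) by (metis ext restrict_apply')
  qed
  then have "(\<Sum>m\<in>M. \<Prod>k\<in>F. r k ^ m k) = (\<Sum>g\<in>(\<lambda>m. restrict m F) ` M. \<Prod>k\<in>F. r k ^ g k)"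
    by (simp add: sum.reindex)
  also have "\<dots> \<le> (\<Sum>g\<in>PiE F B. \<Prod>k\<in>F. r k ^ g k)"
    using F M(1) r(1) by (intro sum_mono2) (auto simp: B_def finite_PiE intro: prod_nonneg)
  also have "\<dots> = (\<Prod>k\<in>F. \<Sum>i\<in>B k. r k ^ i)"
    using F M(1) by (subst prod_sum_PiE) (auto simp: B_def)
  also have "\<dots> \<le> (\<Prod>k\<in>F. 1 / (1 - r k))"
    using r M(1) by (intro prod_mono conjI sum_nonneg sum_power_le_geometric) (auto simp: B_def)
  finally show ?thesis .
qed

text \<open>The left-hand side is the grand-canonical partition function of independent bosonic
  modes with Boltzmann factors \<open>r k\<close>, which equals \<open>\<Prod>k. 1 / (1 - r k)\<close>.\<close>

lemma partition_function_le:
  fixes r :: "'k \<Rightarrow> real"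
  assumes r: "\<And>k. 0 \<le> r k" "\<And>k. r k < 1"
    and summable: "(\<lambda>k. - ln (1 - r k)) summable_on UNIV"
  shows "(\<Sum>\<^sub>\<infinity>m. ennreal (if finite {k. m k \<noteq> 0} then \<Prod>k\<in>{k. m k \<noteq> 0}. r k ^ m k else 0))
    \<le> ennreal (exp (\<Sum>\<^sub>\<infinity>k. - ln (1 - r k)))"
  unfolding infsum_ennreal_eq_SUP
proof (rule SUP_least)
  fix M :: "('k \<Rightarrow> nat) set" assume "M \<in> {M. finite M \<and> M \<subseteq> UNIV}"
  then have M: "finite M" by simp
  define M' where "M' = {m\<in>M. finite {k. m k \<noteq> 0}}"
  define F where "F = (\<Union>m\<in>M'. {k. m k \<noteq> 0})"
  have M': "finite M'" using M by (simp add: M'_def)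
  have F: "finite F" using M' by (auto simp: F_def M'_def)
  have "(\<Sum>m\<in>M. if finite {k. m k \<noteq> 0} then \<Prod>k\<in>{k. m k \<noteq> 0}. r k ^ m k else 0)
      = (\<Sum>m\<in>M'. \<Prod>k\<in>{k. m k \<noteq> 0}. r k ^ m k)"
    using M by (simp add: M'_def sum.inter_filter [symmetric])
  also have "\<dots> = (\<Sum>m\<in>M'. \<Prod>k\<in>F. r k ^ m k)"
    using F by (intro sum.cong prod.mono_neutral_left) (auto simp: F_def)
  also have "\<dots> \<le> (\<Prod>k\<in>F. 1 / (1 - r k))"
    by (rule sum_prod_power_le_prod_geometric[OF r F M']) (auto simp: F_def)
  also have "\<dots> = exp (\<Sum>k\<in>F. - ln (1 - r k))"
  proof -
    have "1 / (1 - r k) = exp (- ln (1 - r k))" for k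
      using r(2)[of k] by (simp add: exp_minus inverse_eq_divide)
    then show ?thesis by (simp add: exp_sum[OF F])
  qed
  also have "\<dots> \<le> exp (\<Sum>\<^sub>\<infinity>k. - ln (1 - r k))"
    using r by (simp add: finite_sum_le_infsum[OF summable F])
  finally show "(\<Sum>m\<in>M. ennreal (if finite {k. m k \<noteq> 0} then \<Prod>k\<in>{k. m k \<noteq> 0}. r k ^ m k else 0))
      \<le> ennreal (exp (\<Sum>\<^sub>\<infinity>k. - ln (1 - r k)))"
    using r(1) by (simp add: sum_ennreal prod_nonneg ennreal_leI)
qed

lemma log_sum_inequality:
  fixes l q :: real
  assumes "0 \<le> l" "0 < q"
  shows "- (l * ln l) + l \<le> - (l * ln q) + q"
proof (cases "l = 0")
  case False
  with assms have l: "0 < l" by simp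
  have "ln (q / l) \<le> q / l - 1" using l assms(2) by (intro ln_le_minus_one) simp
  then have "l * ln (q / l) \<le> l * (q / l - 1)" using l by (intro mult_left_mono) auto
  moreover have "l * ln (q / l) = l * ln q - l * ln l" using l assms(2) by (simp add: ln_div algebra_simps)
  moreover have "l * (q / l - 1) = q - l" using l by (simp add: field_simps)
  ultimately show ?thesis by simp
qed (use assms in simp)

lemma log_sum_inequality_weighted_ennreal:
  fixes p l e L q :: real
  assumes "0 \<le> p" "0 \<le> l" "l \<le> 1" "0 \<le> e" "0 \<le> L" "0 \<le> q" "p \<noteq> 0 \<Longrightarrow> q = exp (- e - L)"
  shows "ennreal p * (ennreal (- (l * ln l)) + ennreal l)
    \<le> ennreal l * ennreal (p * e) + ennreal L * ennreal l * ennreal p + ennreal p * ennreal q"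
proof (cases "p = 0")
  case False
  define h where "h = - (l * ln l)"
  have "0 \<le> h" using assms(2,3) by (cases "l = 0") (auto simp: h_def mult_nonneg_nonpos)
  have "h + l \<le> l * (e + L) + q"
    using log_sum_inequality[OF assms(2), of q] assms(7)[OF False] by (simp add: h_def algebra_simps)
  then have "p * (h + l) \<le> p * (l * (e + L) + q)"
    using assms(1) by (rule mult_left_mono)
  also have "\<dots> = l * (p * e) + L * l * p + p * q"
    by (simp add: algebra_simps)
  finally have "ennreal (p * (h + l)) \<le> ennreal (l * (p * e) + L * l * p + p * q)"
    by (rule ennreal_leI)
  then show ?thesis
    using assms(1-6) \<open>0 \<le> h\<close> by (simp add: h_def [symmetric] ennreal_mult mult_nonneg_nonneg)
qed simp

lemma infsum_infsum_mult_le_infsum_ennreal: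
  fixes P :: "'j \<Rightarrow> 'm \<Rightarrow> real" and q :: "'m \<Rightarrow> ennreal"
  assumes "\<And>m. (\<Sum>\<^sub>\<infinity>j. ennreal (P j m)) \<le> 1"
  shows "(\<Sum>\<^sub>\<infinity>j. \<Sum>\<^sub>\<infinity>m. ennreal (P j m) * q m) \<le> (\<Sum>\<^sub>\<infinity>m. q m)"
proof -
  have "(\<Sum>\<^sub>\<infinity>j. \<Sum>\<^sub>\<infinity>m. ennreal (P j m) * q m) = (\<Sum>\<^sub>\<infinity>m. (\<Sum>\<^sub>\<infinity>j. ennreal (P j m)) * q m)"
    by (simp add: infsum_swap_ennreal[of _ UNIV] infsum_cmult_left_ennreal)
  also have "\<dots> \<le> (\<Sum>\<^sub>\<infinity>m. q m)"
    using mult_right_mono[OF assms] by (intro infsum_mono_ennreal) (metis mult_1 zero_le)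
  finally show ?thesis .
qed

text \<open>Gibbs variational principle for a state \<open>\<Sum>j. lam j |\<psi> j\<rangle>\<langle>\<psi> j|\<close> and a Hamiltonian
  \<open>E\<close> that is diagonal in a basis: \<open>P j m\<close> is the probability of the basis vector \<open>m\<close>
  in \<open>\<psi> j\<close>.\<close>

lemma entropy_le_energy_plus_log_partition:
  fixes lam :: "nat \<Rightarrow> real" and P :: "nat \<Rightarrow> 'm \<Rightarrow> real" and E w :: "'m \<Rightarrow> real"
  assumes lam: "\<And>j. 0 \<le> lam j" "\<And>j. lam j \<le> 1" "(\<Sum>\<^sub>\<infinity>j. ennreal (lam j)) = 1"
    and P: "\<And>j m. 0 \<le> P j m" "\<And>j. (\<Sum>\<^sub>\<infinity>m. ennreal (P j m)) = 1"
      "\<And>m. (\<Sum>\<^sub>\<infinity>j. ennreal (P j m)) \<le> 1"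
    and E: "\<And>m. 0 \<le> E m" and L: "0 \<le> L"
    and w: "\<And>m. 0 \<le> w m" "\<And>j m. P j m \<noteq> 0 \<Longrightarrow> w m = exp (- E m)"
      "(\<Sum>\<^sub>\<infinity>m. ennreal (w m)) \<le> ennreal (exp L)"
  shows "(\<Sum>\<^sub>\<infinity>j. ennreal (- (lam j * ln (lam j))))
    \<le> (\<Sum>\<^sub>\<infinity>j. ennreal (lam j) * (\<Sum>\<^sub>\<infinity>m. ennreal (P j m * E m))) + ennreal L"
proof -
  define q where "q m = w m * exp (- L)" for m
  define h where "h j = ennreal (- (lam j * ln (lam j)))" for j
  define T where "T j = (\<Sum>\<^sub>\<infinity>m. ennreal (P j m * E m))" for j
  have per_vector: "h j + ennreal (lam j)
      \<le> ennreal (lam j) * T j + ennreal L * ennreal (lam j) + (\<Sum>\<^sub>\<infinity>m. ennreal (P j m) * ennreal (q m))"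
    for j
  proof -
    have "h j + ennreal (lam j) = (\<Sum>\<^sub>\<infinity>m. ennreal (P j m) * (h j + ennreal (lam j)))"
      by (simp add: infsum_cmult_left_ennreal P(2))
    also have "\<dots> \<le> (\<Sum>\<^sub>\<infinity>m. ennreal (lam j) * ennreal (P j m * E m)
        + ennreal L * ennreal (lam j) * ennreal (P j m) + ennreal (P j m) * ennreal (q m))"
      unfolding h_def using P(1) lam(1,2) E L w(1)
      by (intro infsum_mono_ennreal log_sum_inequality_weighted_ennreal)
        (auto simp: q_def w(2) exp_diff exp_minus field_simps)
    also have "\<dots> = ennreal (lam j) * T j + ennreal L * ennreal (lam j)
        + (\<Sum>\<^sub>\<infinity>m. ennreal (P j m) * ennreal (q m))"
      by (simp add: T_def infsum_add_ennreal infsum_cmult_right_ennreal P(2))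
    finally show ?thesis .
  qed
  have "(\<Sum>\<^sub>\<infinity>j. \<Sum>\<^sub>\<infinity>m. ennreal (P j m) * ennreal (q m)) \<le> (\<Sum>\<^sub>\<infinity>m. ennreal (q m))"
    by (rule infsum_infsum_mult_le_infsum_ennreal[of P]) (rule P(3))
  also have "\<dots> = (\<Sum>\<^sub>\<infinity>m. ennreal (w m)) * ennreal (exp (- L))"
    using w(1) by (simp add: q_def ennreal_mult infsum_cmult_left_ennreal)
  also have "\<dots> \<le> ennreal (exp L) * ennreal (exp (- L))"
    by (rule mult_right_mono[OF w(3)]) simp
  also have "\<dots> = 1" by (simp flip: ennreal_mult exp_add)
  finally have weights: "(\<Sum>\<^sub>\<infinity>j. \<Sum>\<^sub>\<infinity>m. ennreal (P j m) * ennreal (q m)) \<le> 1" .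
  have "1 + (\<Sum>\<^sub>\<infinity>j. h j) = (\<Sum>\<^sub>\<infinity>j. h j + ennreal (lam j))"
    by (simp add: infsum_add_ennreal lam(3) add.commute)
  also have "\<dots> \<le> (\<Sum>\<^sub>\<infinity>j. ennreal (lam j) * T j + ennreal L * ennreal (lam j)
      + (\<Sum>\<^sub>\<infinity>m. ennreal (P j m) * ennreal (q m)))"
    by (rule infsum_mono_ennreal) (rule per_vector)
  also have "\<dots> = (\<Sum>\<^sub>\<infinity>j. ennreal (lam j) * T j) + ennreal L
      + (\<Sum>\<^sub>\<infinity>j. \<Sum>\<^sub>\<infinity>m. ennreal (P j m) * ennreal (q m))"
    by (simp add: infsum_add_ennreal infsum_cmult_right_ennreal lam(3))
  also have "\<dots> \<le> 1 + ((\<Sum>\<^sub>\<infinity>j. ennreal (lam j) * T j) + ennreal L)"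
    using weights by (simp add: add.commute add_left_mono)
  finally show ?thesis by (simp add: ennreal_add_left_cancel_le h_def T_def)
qed

lemma kin_nonneg: "kin m \<ge> 0"
  by (simp add: kin_def sum_nonneg psq_nonneg)

lemma numop_nonneg: "numop m \<ge> 0"
  by (simp add: numop_def sum_nonneg)

lemma prod_boltzmann_factors:
  assumes "finite (supp_cfg m)"
  shows "(\<Prod>k\<in>supp_cfg m. exp (- \<beta> * (psq k + x)) ^ m k) = exp (- \<beta> * (kin m + x * numop m))"
proof -
  have "(\<Prod>k\<in>supp_cfg m. exp (- \<beta> * (psq k + x)) ^ m k)
      = exp (\<Sum>k\<in>supp_cfg m. - \<beta> * ((psq k + x) * real (m k)))"
    by (simp add: exp_sum[OF assms] mult_ac flip: exp_of_nat_mult)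
  also have "(\<Sum>k\<in>supp_cfg m. - \<beta> * ((psq k + x) * real (m k))) = - \<beta> * (kin m + x * numop m)"
    unfolding kin_def numop_def of_nat_sum
    by (simp only: sum_distrib_left [symmetric] distrib_right sum.distrib)
  finally show ?thesis .
qed

lemma entropy_le_free_bose:
  assumes st: "is_state lam \<psi>" and "\<beta> > 0" "x > 0"
  shows "(\<Sum>\<^sub>\<infinity>j. ennreal (- (lam j * ln (lam j))))
    \<le> ennreal \<beta> * (\<Sum>\<^sub>\<infinity>j. ennreal (lam j) *
          (\<Sum>\<^sub>\<infinity>m. ennreal ((cmod (\<psi> j m))^2 * (kin m + x * numop m))))
      + ennreal (\<Sum>\<^sub>\<infinity>k. - ln (1 - exp (- \<beta> * (psq k + x))))"
proof -
  define r where "r k = exp (- \<beta> * (psq k + x))" for k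
  define E where "E m = kin m + x * numop m" for m
  define w where "w m = (if finite {k. m k \<noteq> 0} then \<Prod>k\<in>{k. m k \<noteq> 0}. r k ^ m k else 0)" for m
  have r: "0 \<le> r k" "r k < 1" for k
    using assms(2,3) psq_nonneg[of k] by (auto simp: r_def add_nonneg_pos)
  have L: "(\<lambda>k. - ln (1 - r k)) summable_on UNIV"
    using log_partition_summable[OF assms(2,3)] by (simp add: r_def)
  have "(\<Sum>\<^sub>\<infinity>j. ennreal (- (lam j * ln (lam j))))
      \<le> (\<Sum>\<^sub>\<infinity>j. ennreal (lam j) * (\<Sum>\<^sub>\<infinity>m. ennreal ((cmod (\<psi> j m))^2 * (\<beta> * E m))))
        + ennreal (\<Sum>\<^sub>\<infinity>k. - ln (1 - r k))"
  proof (rule entropy_le_energy_plus_log_partition)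
    show "w m = exp (- (\<beta> * E m))" if "(cmod (\<psi> j m))^2 \<noteq> 0" for j m
    proof -
      have "finite (supp_cfg m)" using that st by (auto intro: state_vector_finite_support)
      then show ?thesis
        using prod_boltzmann_factors[of m \<beta> x] by (simp add: w_def r_def E_def supp_cfg_def)
    qed
    show "(\<Sum>\<^sub>\<infinity>m. ennreal (w m)) \<le> ennreal (exp (\<Sum>\<^sub>\<infinity>k. - ln (1 - r k)))"
      unfolding w_def by (rule partition_function_le[OF r L])
    show "0 \<le> (\<Sum>\<^sub>\<infinity>k. - ln (1 - r k))"
      using r by (intro infsum_nonneg) simp
  qed (use st assms(2,3) r in \<open>auto simp: state_weight_nonneg state_weight_le_one
      state_weights_sum_ennreal state_vector_normalized_ennreal state_bessel_inequality E_def w_def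
      kin_nonneg numop_nonneg prod_nonneg\<close>)
  also have "(\<Sum>\<^sub>\<infinity>j. ennreal (lam j) * (\<Sum>\<^sub>\<infinity>m. ennreal ((cmod (\<psi> j m))^2 * (\<beta> * E m))))
      = ennreal \<beta> * (\<Sum>\<^sub>\<infinity>j. ennreal (lam j) * (\<Sum>\<^sub>\<infinity>m. ennreal ((cmod (\<psi> j m))^2 * E m)))"
  proof -
    have "(\<Sum>\<^sub>\<infinity>m. ennreal ((cmod (\<psi> j m))^2 * (\<beta> * E m)))
        = ennreal \<beta> * (\<Sum>\<^sub>\<infinity>m. ennreal ((cmod (\<psi> j m))^2 * E m))" for j
      using assms(2) by (simp add: ennreal_mult' mult.left_commute[of _ \<beta>] infsum_cmult_right_ennreal)
    then show ?thesis
      by (simp add: mult.left_commute[of _ "ennreal \<beta>"] infsum_cmult_right_ennreal)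
  qed
  finally show ?thesis by (simp add: E_def r_def)
qed

section \<open>Completing the square in the particle number\<close>

lemma completing_square:
  fixes \<kappa> c a x k n :: real
  assumes "2 * \<kappa> * c = a + x"
  shows "max (k - a * n) 0 + \<kappa> * n^2 + \<kappa> * c^2 = max (a * n - k) 0 + (k + x * n) + \<kappa> * (n - c)^2"
proof -
  have "\<kappa> * (n - c)^2 = \<kappa> * n^2 - (2 * \<kappa> * c) * n + \<kappa> * c^2"
    by (simp add: power2_diff algebra_simps)
  then have "\<kappa> * (n - c)^2 = \<kappa> * n^2 - (a + x) * n + \<kappa> * c^2"
    by (simp only: assms)
  moreover have "max (k - a * n) 0 = (k - a * n) + max (a * n - k) 0" by auto
  ultimately show ?thesis by (simp add: algebra_simps)
qed

lemma completing_square_weighted_ennreal: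
  fixes P \<kappa> c a x k n :: real
  assumes "2 * \<kappa> * c = a + x" "0 \<le> P" "0 \<le> \<kappa>" "0 \<le> k + x * n"
  shows "ennreal (P * max (a * n - k) 0) + ennreal (P * (k + x * n)) + ennreal \<kappa> * ennreal (P * (n - c)^2)
    = ennreal (P * max (k - a * n) 0) + ennreal \<kappa> * ennreal (P * n^2) + ennreal P * ennreal (\<kappa> * c^2)"
proof -
  have "P * max (a * n - k) 0 + P * (k + x * n) + \<kappa> * (P * (n - c)^2)
      = P * max (k - a * n) 0 + \<kappa> * (P * n^2) + P * (\<kappa> * c^2)"
    using arg_cong[OF completing_square[OF assms(1), of k n], of "\<lambda>t. P * t"]
    by (simp add: algebra_simps)
  then have "ennreal (P * max (a * n - k) 0 + P * (k + x * n) + \<kappa> * (P * (n - c)^2))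
      = ennreal (P * max (k - a * n) 0 + \<kappa> * (P * n^2) + P * (\<kappa> * c^2))"
    by simp
  then show ?thesis using assms(2-4) by (simp add: ennreal_mult)
qed

lemma interaction_ge_zero_momentum:
  assumes "fock_vec \<psi>" "\<And>p. vh p \<ge> 0" "\<eta> > 0"
  shows "ennreal (vh 0 / (2 * \<eta>)) * (\<Sum>\<^sub>\<infinity>m. ennreal ((cmod (\<psi> m))^2 * (numop m)^2))
    \<le> ennreal (1 / (2 * \<eta>)) * (\<Sum>\<^sub>\<infinity>p. ennreal (vh p) * (\<Sum>\<^sub>\<infinity>m. ennreal ((cmod (dens_op p \<psi> m))^2)))"
proof -
  have "(\<Sum>\<^sub>\<infinity>m. ennreal ((cmod (dens_op 0 \<psi> m))^2)) = (\<Sum>\<^sub>\<infinity>m. ennreal ((cmod (\<psi> m))^2 * (numop m)^2))"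
    by (simp add: dens_op_zero[OF assms(1)] norm_mult power_mult_distrib mult.commute)
  then have "ennreal (vh 0) * (\<Sum>\<^sub>\<infinity>m. ennreal ((cmod (\<psi> m))^2 * (numop m)^2))
      \<le> (\<Sum>\<^sub>\<infinity>p. ennreal (vh p) * (\<Sum>\<^sub>\<infinity>m. ennreal ((cmod (dens_op p \<psi> m))^2)))"
    using finite_sum_le_infsum_ennreal[of "{0}" UNIV
        "\<lambda>p. ennreal (vh p) * (\<Sum>\<^sub>\<infinity>m. ennreal ((cmod (dens_op p \<psi> m))^2))"] by simp
  moreover have "ennreal (vh 0 / (2 * \<eta>)) = ennreal (1 / (2 * \<eta>)) * ennreal (vh 0)"
    using assms(2)[of 0] assms(3) by (simp flip: ennreal_mult)
  ultimately show ?thesis by (simp add: mult.assoc mult_left_mono)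
qed

lemma energy_vector_bound:
  fixes \<psi> :: fvec and \<mu> :: real
  assumes fock: "fock_vec \<psi>" and norm: "(\<Sum>\<^sub>\<infinity>m. ennreal ((cmod (\<psi> m))^2)) = 1"
    and vh: "\<And>p. vh p \<ge> 0" "vh 0 > 0" and "\<eta> > 0" "x \<ge> 0"
  defines "\<kappa> \<equiv> vh 0 / (2 * \<eta>)" and "c \<equiv> (\<mu> + x + v_zero vh / (2 * \<eta>)) * \<eta> / vh 0"
  shows "(\<Sum>\<^sub>\<infinity>m. ennreal ((cmod (\<psi> m))^2 * max (- diag_coef vh \<eta> \<mu> m) 0))
      + (\<Sum>\<^sub>\<infinity>m. ennreal ((cmod (\<psi> m))^2 * (kin m + x * numop m)))
      + ennreal \<kappa> * (\<Sum>\<^sub>\<infinity>m. ennreal ((cmod (\<psi> m))^2 * (numop m - c)^2))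
    \<le> (\<Sum>\<^sub>\<infinity>m. ennreal ((cmod (\<psi> m))^2 * max (diag_coef vh \<eta> \<mu> m) 0))
      + ennreal (1 / (2 * \<eta>)) * (\<Sum>\<^sub>\<infinity>p. ennreal (vh p) * (\<Sum>\<^sub>\<infinity>m. ennreal ((cmod (dens_op p \<psi> m))^2)))
      + ennreal (\<kappa> * c^2)"
proof -
  define P where "P m = (cmod (\<psi> m))^2" for m
  define a where "a = \<mu> + v_zero vh / (2 * \<eta>)"
  have "2 * \<kappa> * c = a + x" using vh(2) \<open>\<eta> > 0\<close> by (simp add: \<kappa>_def c_def a_def field_simps)
  moreover have "0 \<le> \<kappa>" using vh(2) \<open>\<eta> > 0\<close> by (simp add: \<kappa>_def)
  ultimately have square: "ennreal (P m * max (a * numop m - kin m) 0) + ennreal (P m * (kin m + x * numop m))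
      + ennreal \<kappa> * ennreal (P m * (numop m - c)^2)
    = ennreal (P m * max (kin m - a * numop m) 0) + ennreal \<kappa> * ennreal (P m * (numop m)^2)
      + ennreal (P m) * ennreal (\<kappa> * c^2)" for m
    using kin_nonneg[of m] numop_nonneg[of m] \<open>x \<ge> 0\<close>
    by (intro completing_square_weighted_ennreal) (simp_all add: P_def)
  have "(\<Sum>\<^sub>\<infinity>m. ennreal (P m * max (a * numop m - kin m) 0)) + (\<Sum>\<^sub>\<infinity>m. ennreal (P m * (kin m + x * numop m)))
      + ennreal \<kappa> * (\<Sum>\<^sub>\<infinity>m. ennreal (P m * (numop m - c)^2))
    = (\<Sum>\<^sub>\<infinity>m. ennreal (P m * max (a * numop m - kin m) 0) + ennreal (P m * (kin m + x * numop m))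
      + ennreal \<kappa> * ennreal (P m * (numop m - c)^2))"
    by (simp add: infsum_add_ennreal infsum_cmult_right_ennreal)
  also have "\<dots> = (\<Sum>\<^sub>\<infinity>m. ennreal (P m * max (kin m - a * numop m) 0)
      + ennreal \<kappa> * ennreal (P m * (numop m)^2) + ennreal (P m) * ennreal (\<kappa> * c^2))"
    by (simp only: square)
  also have "\<dots> = (\<Sum>\<^sub>\<infinity>m. ennreal (P m * max (kin m - a * numop m) 0))
      + ennreal \<kappa> * (\<Sum>\<^sub>\<infinity>m. ennreal (P m * (numop m)^2)) + ennreal (\<kappa> * c^2)"
    by (simp add: infsum_add_ennreal infsum_cmult_right_ennreal infsum_cmult_left_ennreal norm[folded P_def])
  also have "\<dots> \<le> (\<Sum>\<^sub>\<infinity>m. ennreal (P m * max (kin m - a * numop m) 0))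
      + ennreal (1 / (2 * \<eta>)) * (\<Sum>\<^sub>\<infinity>p. ennreal (vh p) * (\<Sum>\<^sub>\<infinity>m. ennreal ((cmod (dens_op p \<psi> m))^2)))
      + ennreal (\<kappa> * c^2)"
    using interaction_ge_zero_momentum[of \<psi> vh, OF fock vh(1) \<open>\<eta> > 0\<close>]
    by (auto simp: P_def \<kappa>_def intro!: add_mono)
  finally show ?thesis by (simp add: P_def a_def diag_coef_def algebra_simps)
qed

lemma energy_lower_bound:
  fixes \<mu> :: real
  assumes st: "is_state lam \<psi>" and vh: "\<And>p. vh p \<ge> 0" "vh 0 > 0" and "\<eta> > 0" "x \<ge> 0"
  defines "\<kappa> \<equiv> vh 0 / (2 * \<eta>)" and "c \<equiv> (\<mu> + x + v_zero vh / (2 * \<eta>)) * \<eta> / vh 0"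
  shows "energy_neg vh \<eta> \<mu> lam \<psi>
      + (\<Sum>\<^sub>\<infinity>j. ennreal (lam j) * (\<Sum>\<^sub>\<infinity>m. ennreal ((cmod (\<psi> j m))^2 * (kin m + x * numop m))))
      + ennreal \<kappa> * num_sq_trace c lam \<psi>
    \<le> energy_pos vh \<eta> \<mu> lam \<psi> + ennreal (\<kappa> * c^2)"
proof -
  define Neg where "Neg j = (\<Sum>\<^sub>\<infinity>m. ennreal ((cmod (\<psi> j m))^2 * max (- diag_coef vh \<eta> \<mu> m) 0))" for j
  define Pos where "Pos j = (\<Sum>\<^sub>\<infinity>m. ennreal ((cmod (\<psi> j m))^2 * max (diag_coef vh \<eta> \<mu> m) 0))
    + ennreal (1 / (2 * \<eta>)) * (\<Sum>\<^sub>\<infinity>p. ennreal (vh p) * (\<Sum>\<^sub>\<infinity>m. ennreal ((cmod (dens_op p (\<psi> j) m))^2)))"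
    for j
  define T where "T j = (\<Sum>\<^sub>\<infinity>m. ennreal ((cmod (\<psi> j m))^2 * (kin m + x * numop m)))" for j
  define Q where "Q j = (\<Sum>\<^sub>\<infinity>m. ennreal ((cmod (\<psi> j m))^2 * (numop m - c)^2))" for j
  have "Neg j + T j + ennreal \<kappa> * Q j \<le> Pos j + ennreal (\<kappa> * c^2)" for j
    unfolding Neg_def Pos_def T_def Q_def \<kappa>_def c_def
    using st vh \<open>\<eta> > 0\<close> \<open>x \<ge> 0\<close>
    by (intro energy_vector_bound) (auto simp: is_state_def state_vector_normalized_ennreal)
  then have "(\<Sum>\<^sub>\<infinity>j. ennreal (lam j) * (Neg j + T j + ennreal \<kappa> * Q j))
      \<le> (\<Sum>\<^sub>\<infinity>j. ennreal (lam j) * (Pos j + ennreal (\<kappa> * c^2)))"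
    by (intro infsum_mono_ennreal mult_left_mono) auto
  then show ?thesis
    by (simp add: energy_neg_def energy_pos_def num_sq_trace_def Neg_def Pos_def T_def Q_def
        distrib_left infsum_add_ennreal infsum_cmult_right_ennreal infsum_cmult_left_ennreal
        state_weights_sum_ennreal[OF st] mult.left_commute[of "ennreal (lam _)" "ennreal \<kappa>"])
qed

lemma ereal_lower_bound_of_ennreal_bounds:
  fixes P N T Q H :: ennreal and \<kappa> \<beta> a b :: real
  assumes energy: "N + T + ennreal \<kappa> * Q \<le> P + ennreal a"
    and entropy: "H \<le> ennreal \<beta> * T + ennreal b"
    and "P \<noteq> top" "\<kappa> > 0" "\<beta> > 0" "a \<ge> 0" "b \<ge> 0"
  shows "ereal \<kappa> * enn2ereal Q - ereal (a + b / \<beta>)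
    \<le> enn2ereal P - enn2ereal N + ereal (1 / \<beta>) * - enn2ereal H"
proof -
  have "N + T + ennreal \<kappa> * Q \<noteq> top" using energy \<open>P \<noteq> top\<close> by (auto simp: top_unique)
  then have "N \<noteq> top" "T \<noteq> top" "Q \<noteq> top" using \<open>\<kappa> > 0\<close> by (auto simp: ennreal_mult_eq_top_iff)
  moreover have "H \<noteq> top" using entropy \<open>T \<noteq> top\<close> by (auto simp: top_unique ennreal_mult_eq_top_iff)
  ultimately obtain p n t q h where real: "P = ennreal p" "N = ennreal n" "T = ennreal t" "Q = ennreal q"
      "H = ennreal h" and nonneg: "0 \<le> p" "0 \<le> n" "0 \<le> t" "0 \<le> q" "0 \<le> h"
    using \<open>P \<noteq> top\<close> by (metis ennreal_cases)
  have sums: "ennreal n + ennreal t + ennreal \<kappa> * ennreal q = ennreal (n + t + \<kappa> * q)"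
    "ennreal p + ennreal a = ennreal (p + a)" "ennreal \<beta> * ennreal t + ennreal b = ennreal (\<beta> * t + b)"
    using nonneg assms(4-7) by (simp_all add: ennreal_mult)
  have "ennreal (n + t + \<kappa> * q) \<le> ennreal (p + a)" "ennreal h \<le> ennreal (\<beta> * t + b)"
    using energy entropy by (simp_all only: sums real)
  moreover have "0 \<le> p + a" "0 \<le> \<beta> * t + b" using nonneg assms(5-7) by simp_all
  ultimately have "n + t + \<kappa> * q \<le> p + a" "h \<le> \<beta> * t + b"
    by (simp_all only: ennreal_le_iff)
  moreover from \<open>h \<le> \<beta> * t + b\<close> have "h / \<beta> \<le> t + b / \<beta>"
    using \<open>\<beta> > 0\<close> by (simp add: field_simps)
  ultimately have "\<kappa> * q - (a + b / \<beta>) \<le> p - n - h / \<beta>" by linarith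
  then show ?thesis using nonneg by (simp add: real)
qed

lemma ereal_add_diff_le_diff:
  fixes E :: ereal
  assumes "r + a \<le> k"
  shows "ereal r + E - ereal k \<le> E - ereal a"
  using assms by (cases E) auto

lemma grand_pot_lower_bound:
  fixes \<mu> :: real
  assumes st: "is_state lam \<psi>" and vh: "\<And>p. vh p \<ge> 0" "vh 0 > 0" and "\<eta> > 0" "\<beta> > 0" "x > 0"
  defines "\<kappa> \<equiv> vh 0 / (2 * \<eta>)" and "c \<equiv> (\<mu> + x + v_zero vh / (2 * \<eta>)) * \<eta> / vh 0"
  shows "ereal \<kappa> * enn2ereal (num_sq_trace c lam \<psi>)
      - ereal (\<kappa> * c^2 + (\<Sum>\<^sub>\<infinity>k. - ln (1 - exp (- \<beta> * (psq k + x)))) / \<beta>)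
    \<le> grand_pot vh \<eta> \<mu> \<beta> lam \<psi>"
proof (cases "energy_pos vh \<eta> \<mu> lam \<psi> = top")
  case False
  have L: "0 \<le> (\<Sum>\<^sub>\<infinity>k. - ln (1 - exp (- \<beta> * (psq k + x))))"
    using \<open>\<beta> > 0\<close> \<open>x > 0\<close> psq_nonneg by (intro infsum_nonneg) (simp add: add_nonneg_pos)
  have "enn2ereal (energy_pos vh \<eta> \<mu> lam \<psi>) - enn2ereal (energy_neg vh \<eta> \<mu> lam \<psi>) \<noteq> \<infinity>"
    using False enn2ereal_nonneg[of "energy_neg vh \<eta> \<mu> lam \<psi>"]
    by (cases "enn2ereal (energy_pos vh \<eta> \<mu> lam \<psi>)"; cases "enn2ereal (energy_neg vh \<eta> \<mu> lam \<psi>)") auto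
  then have "grand_pot vh \<eta> \<mu> \<beta> lam \<psi> = enn2ereal (energy_pos vh \<eta> \<mu> lam \<psi>)
      - enn2ereal (energy_neg vh \<eta> \<mu> lam \<psi>)
      + ereal (1 / \<beta>) * - enn2ereal (\<Sum>\<^sub>\<infinity>j. ennreal (- (lam j * ln (lam j))))"
    using False by (simp add: grand_pot_def energy_def ent_term_def)
  moreover have "0 < \<kappa>" using vh(2) \<open>\<eta> > 0\<close> by (simp add: \<kappa>_def)
  ultimately show ?thesis
    using ereal_lower_bound_of_ennreal_bounds[OF
        energy_lower_bound[of lam \<psi> vh, OF st vh \<open>\<eta> > 0\<close> less_imp_le[OF \<open>x > 0\<close>], of \<mu>,
          folded \<kappa>_def c_def]
        entropy_le_free_bose[OF st \<open>\<beta> > 0\<close> \<open>x > 0\<close>] False] \<open>\<beta> > 0\<close> L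
    by simp
qed (simp add: grand_pot_def energy_def)

lemma grand_pot_ge_ideal_gas_minus_remainder:
  fixes \<mu> :: real
  assumes st: "is_state lam \<psi>" and vh: "\<And>p. vh p \<ge> 0" "vh 0 > 0" and "\<eta> > 0" "\<beta> > 0" "x > 0"
  shows "ereal (Phi_id_plus \<beta> (- x) - (\<mu> + x)^2 * \<eta> / (2 * vh 0))
      + ereal (vh 0 / (2 * \<eta>)) * enn2ereal (num_sq_trace ((\<mu> + x + v_zero vh / (2 * \<eta>)) * \<eta> / vh 0) lam \<psi>)
      - ereal ((\<mu> + x) * v_zero vh / (2 * vh 0) + (v_zero vh)^2 / (8 * \<eta> * vh 0)
          + 1 / \<beta> * - ln (1 - exp (- \<beta> * x)))
    \<le> grand_pot vh \<eta> \<mu> \<beta> lam \<psi>"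
proof -
  define R where "R = (\<mu> + x) * v_zero vh / (2 * vh 0) + (v_zero vh)^2 / (8 * \<eta> * vh 0)"
  have "vh 0 / (2 * \<eta>) * ((\<mu> + x + v_zero vh / (2 * \<eta>)) * \<eta> / vh 0)^2 = (\<mu> + x)^2 * \<eta> / (2 * vh 0) + R"
    using \<open>\<eta> > 0\<close> vh(2) by (simp add: R_def field_simps power2_eq_square)
  moreover have "(\<Sum>\<^sub>\<infinity>k. - ln (1 - exp (- \<beta> * (psq k + x)))) / \<beta>
      = 1 / \<beta> * - ln (1 - exp (- \<beta> * x)) - Phi_id_plus \<beta> (- x)"
    using log_partition_eq[OF \<open>\<beta> > 0\<close> \<open>x > 0\<close>] \<open>\<beta> > 0\<close> by (simp add: field_simps)
  ultimately show ?thesis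
    using order.trans[OF ereal_add_diff_le_diff
        grand_pot_lower_bound[of lam \<psi> vh, OF st vh \<open>\<eta> > 0\<close> \<open>\<beta> > 0\<close> \<open>x > 0\<close>, of \<mu>]]
    by (simp add: R_def)
qed

section \<open>Control of the remainder\<close>

definition neg_eff_chem_pot_bound :: "real \<Rightarrow> real \<Rightarrow> real \<Rightarrow> real" where
  "neg_eff_chem_pot_bound c0 vh0 \<eta> = 2 * (\<eta> powr (2/3) / c0)
     + (\<eta> powr (2/3) / c0) * ln (1 + 16 * vh0 * (1 + \<eta> powr (2/3) / c0)^3 / ((\<eta> powr (2/3) / c0) * \<eta>))"

definition remainder_bound :: "real \<Rightarrow> real \<Rightarrow> real \<Rightarrow> real \<Rightarrow> real" where
  "remainder_bound c0 vh0 v0 \<eta> = (1 / c0 + neg_eff_chem_pot_bound c0 vh0 \<eta>) * v0 / (2 * vh0)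
     + v0^2 / (8 * \<eta> * vh0)
     + (\<eta> powr (2/3) / c0) * ln (1 + (1 / c0 + neg_eff_chem_pot_bound c0 vh0 \<eta>) * \<eta> / vh0)"

lemma remainder_bound_bigo:
  fixes c0 vh0 v0 :: real
  assumes "c0 > 0" "vh0 > 0" "v0 \<ge> 0"
  shows "remainder_bound c0 vh0 v0 \<in> O(\<lambda>\<eta>. \<eta> powr (2/3) * ln \<eta>)"
  unfolding remainder_bound_def[abs_def] neg_eff_chem_pot_bound_def using assms by real_asymp

lemma remainder_bound_eventually_le:
  fixes c0 vh0 v0 :: real
  assumes "c0 > 0" "vh0 > 0" "v0 \<ge> 0"
  obtains C N where "C > 0" "N \<ge> 1"
    "\<And>\<eta>. \<eta> \<ge> N \<Longrightarrow> remainder_bound c0 vh0 v0 \<eta> \<le> C * \<eta> powr (2/3) * ln \<eta>"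
proof -
  obtain C where "C > 0" and ev: "eventually (\<lambda>\<eta>. norm (remainder_bound c0 vh0 v0 \<eta>)
      \<le> C * norm (\<eta> powr (2/3) * ln \<eta>)) at_top"
    using landau_o.bigE[OF remainder_bound_bigo[OF assms]] by blast
  then obtain N where N: "\<And>\<eta>. \<eta> \<ge> N \<Longrightarrow> norm (remainder_bound c0 vh0 v0 \<eta>)
      \<le> C * norm (\<eta> powr (2/3) * ln \<eta>)"
    by (auto simp: eventually_at_top_linorder)
  show ?thesis
  proof (rule that[of C "max N 1"])
    fix \<eta> :: real assume "\<eta> \<ge> max N 1"
    then show "remainder_bound c0 vh0 v0 \<eta> \<le> C * \<eta> powr (2/3) * ln \<eta>"
      using N[of \<eta>] by (simp add: abs_mult mult.assoc)
  qed (use \<open>C > 0\<close> in auto)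
qed

lemma inverse_le_of_powr_le:
  fixes c0 \<eta> \<beta> :: real
  assumes "c0 > 0" "\<eta> > 0" "c0 * \<eta> powr (-2/3) \<le> \<beta>"
  shows "1 / \<beta> \<le> \<eta> powr (2/3) / c0"
proof -
  define p where "p = \<eta> powr (2/3)"
  have "p > 0" using assms(2) by (simp add: p_def)
  have "\<eta> powr (-2/3) = inverse p" by (simp add: p_def powr_minus)
  then have "c0 / p \<le> \<beta>" using assms(3) by (simp only: divide_inverse)
  then have "c0 \<le> \<beta> * p" using \<open>p > 0\<close> by (simp add: pos_divide_le_eq)
  moreover have "\<beta> > 0" using \<open>c0 / p \<le> \<beta>\<close> \<open>p > 0\<close> assms(1) by (smt (verit) divide_pos_pos)
  ultimately show ?thesis using assms(1) \<open>p > 0\<close> unfolding p_def [symmetric] by (simp add: field_simps)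
qed

lemma neg_eff_chem_pot_le:
  fixes c0 vh0 \<eta> \<beta> \<mu> x :: real
  assumes "c0 > 0" "vh0 > 0" "\<eta> > 0" "\<beta> > 0" "c0 * \<eta> powr (-2/3) \<le> \<beta>"
    and "- (\<eta> powr (2/3)) / c0 \<le> \<mu>" and "x > 0"
    and occupation: "(\<mu> + x) * \<eta> / vh0 \<le> (2 * (1 + 1 / \<beta>)) ^ 3 / (exp (\<beta> * x) - 1)"
  shows "x \<le> neg_eff_chem_pot_bound c0 vh0 \<eta>"
proof -
  define a where "a = \<eta> powr (2/3) / c0"
  define R where "R = 16 * vh0 * (1 + a)^3 / (a * \<eta>)"
  have a: "a > 0" "1 / \<beta> \<le> a" using assms inverse_le_of_powr_le[of c0 \<eta> \<beta>] by (simp_all add: a_def)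
  have R: "R \<ge> 0" using a assms(2,3) by (simp add: R_def)
  have bound: "neg_eff_chem_pot_bound c0 vh0 \<eta> = 2 * a + a * ln (1 + R)"
    by (simp add: neg_eff_chem_pot_bound_def a_def R_def)
  show ?thesis
  proof (cases "x \<le> 2 * a")
    case True
    moreover have "0 \<le> a * ln (1 + R)" using a R by simp
    ultimately show ?thesis by (simp add: bound)
  next
    case False
    have "x / a \<le> \<beta> * x" using a \<open>x > 0\<close> \<open>\<beta> > 0\<close> by (simp add: field_simps)
    moreover have "2 < x / a" using False a by (simp add: field_simps)
    ultimately have "2 \<le> exp (\<beta> * x)"
      using exp_ge_add_one_self[of "\<beta> * x"] by linarith
    then have "1 / (exp (\<beta> * x) - 1) \<le> 2 * exp (- (\<beta> * x))"
      by (rule inverse_exp_minus_one_le_two_exp)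
    also have "\<dots> \<le> 2 * exp (- (x / a))" using \<open>x / a \<le> \<beta> * x\<close> by simp
    finally have zero_mode: "1 / (exp (\<beta> * x) - 1) \<le> 2 * exp (- (x / a))" .
    have "(1 + 1 / \<beta>) ^ 3 \<le> (1 + a) ^ 3" using a \<open>\<beta> > 0\<close> by (intro power_mono) auto
    then have "(2 * (1 + 1 / \<beta>)) ^ 3 \<le> 8 * (1 + a) ^ 3" by (simp only: power_mult_distrib) simp
    then have "(2 * (1 + 1 / \<beta>)) ^ 3 * (1 / (exp (\<beta> * x) - 1)) \<le> 8 * (1 + a) ^ 3 * (2 * exp (- (x / a)))"
      using zero_mode \<open>2 \<le> exp (\<beta> * x)\<close> a \<open>\<beta> > 0\<close> \<open>x > 0\<close> by (intro mult_mono) auto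
    then have occupation_le:
      "(2 * (1 + 1 / \<beta>)) ^ 3 / (exp (\<beta> * x) - 1) \<le> 16 * (1 + a) ^ 3 * exp (- (x / a))"
      by simp
    have "a \<le> \<mu> + x" using False assms(6) by (simp add: a_def)
    then have "a * \<eta> / vh0 \<le> (\<mu> + x) * \<eta> / vh0"
      using assms(2,3) by (intro divide_right_mono mult_right_mono) auto
    also have "\<dots> \<le> 16 * (1 + a) ^ 3 * exp (- (x / a))"
      using occupation occupation_le by linarith
    finally have "a * \<eta> / vh0 \<le> 16 * (1 + a) ^ 3 * exp (- (x / a))" .
    then have "exp (x / a) \<le> R"
      using a assms(2,3) by (simp add: R_def exp_minus field_simps)
    then have "x / a \<le> ln (1 + R)"
      using R by (subst ln_ge_iff) auto
    then show ?thesis using a by (simp add: bound field_simps)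
  qed
qed

lemma zero_mode_free_energy_le:
  fixes c0 vh0 \<eta> \<beta> \<mu> x B :: real
  assumes "c0 > 0" "vh0 > 0" "\<eta> > 0" "\<beta> > 0" "c0 * \<eta> powr (-2/3) \<le> \<beta>" "x > 0"
    and occupation: "1 / (exp (\<beta> * x) - 1) \<le> (\<mu> + x) * \<eta> / vh0" and "\<mu> + x \<le> B"
  shows "1 / \<beta> * - ln (1 - exp (- \<beta> * x)) \<le> \<eta> powr (2/3) / c0 * ln (1 + B * \<eta> / vh0)"
proof -
  have bx: "\<beta> * x > 0" using assms(4,6) by simp
  then have pos: "0 < 1 / (exp (\<beta> * x) - 1)" by simp
  have "(\<mu> + x) * \<eta> / vh0 \<le> B * \<eta> / vh0"
    using assms(2,3,8) by (intro divide_right_mono mult_right_mono) auto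
  then have "1 + 1 / (exp (\<beta> * x) - 1) \<le> 1 + B * \<eta> / vh0" using occupation by linarith
  moreover have "- ln (1 - exp (- \<beta> * x)) = ln (1 + 1 / (exp (\<beta> * x) - 1))"
    using neg_ln_one_minus_exp_neg[OF bx] by simp
  ultimately have "- ln (1 - exp (- \<beta> * x)) \<le> ln (1 + B * \<eta> / vh0)"
    using pos by (simp add: ln_mono add_pos_pos)
  moreover have "0 \<le> - ln (1 - exp (- \<beta> * x))"
    using neg_ln_one_minus_exp_neg[OF bx] pos by simp
  moreover have "1 / \<beta> \<le> \<eta> powr (2/3) / c0" by (rule inverse_le_of_powr_le[OF assms(1,3,5)])
  ultimately show ?thesis
    using assms(1) by (intro mult_mono) auto
qed

lemma remainder_le:
  fixes c0 vh0 v0 \<eta> \<beta> \<mu> x :: real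
  assumes "c0 > 0" "vh0 > 0" "v0 \<ge> 0" "\<eta> > 0" "\<beta> > 0" "c0 * \<eta> powr (-2/3) \<le> \<beta>"
    and "- (\<eta> powr (2/3)) / c0 \<le> \<mu>" "\<mu> \<le> 1 / c0" "x > 0"
    and "1 / (exp (\<beta> * x) - 1) \<le> (\<mu> + x) * \<eta> / vh0"
    and "(\<mu> + x) * \<eta> / vh0 \<le> (2 * (1 + 1 / \<beta>)) ^ 3 / (exp (\<beta> * x) - 1)"
  shows "(\<mu> + x) * v0 / (2 * vh0) + v0^2 / (8 * \<eta> * vh0) + 1 / \<beta> * - ln (1 - exp (- \<beta> * x))
    \<le> remainder_bound c0 vh0 v0 \<eta>"
proof -
  define B where "B = 1 / c0 + neg_eff_chem_pot_bound c0 vh0 \<eta>"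
  have "\<mu> + x \<le> B"
    using neg_eff_chem_pot_le[OF assms(1,2,4-7,9,11)] assms(8) by (simp add: B_def)
  then have "(\<mu> + x) * v0 / (2 * vh0) \<le> B * v0 / (2 * vh0)"
    using assms(2,3) by (intro divide_right_mono mult_right_mono) auto
  moreover have "1 / \<beta> * - ln (1 - exp (- \<beta> * x)) \<le> \<eta> powr (2/3) / c0 * ln (1 + B * \<eta> / vh0)"
    by (rule zero_mode_free_energy_le[OF assms(1,2,4-6,9,10) \<open>\<mu> + x \<le> B\<close>])
  ultimately show ?thesis by (simp add: remainder_bound_def B_def)
qed

theorem proposition2p3:
  fixes vh :: "mom \<Rightarrow> real" and c0 :: real
  assumes "\<forall>p. vh p \<ge> 0"
    and "vh summable_on UNIV"
    and "vh 0 > 0"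
    and "0 < c0" and "c0 \<le> 1"
  shows "\<exists>C \<eta>0. C > 0 \<and> \<eta>0 > 0 \<and>
    (\<forall>\<eta> \<beta> \<mu> mt lam \<psi>. \<eta> \<ge> \<eta>0 \<longrightarrow>
       c0 * \<eta> powr (-2/3) \<le> \<beta> \<longrightarrow> \<beta> \<le> \<eta> powr (-2/3) / c0 \<longrightarrow>
       - (\<eta> powr (2/3)) / c0 \<le> \<mu> \<longrightarrow> \<mu> \<le> 1 / c0 \<longrightarrow>
       is_eff_chem_pot vh \<eta> \<mu> \<beta> mt \<longrightarrow>
       is_state lam \<psi> \<longrightarrow>
       grand_pot vh \<eta> \<mu> \<beta> lam \<psi> \<ge>
         ereal (Phi_id_plus \<beta> mt - (\<mu> - mt)^2 * \<eta> / (2 * vh 0))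
         + ereal (vh 0 / (2 * \<eta>)) *
             enn2ereal (num_sq_trace ((\<mu> - mt + v_zero vh / (2 * \<eta>)) * \<eta> / vh 0) lam \<psi>)
         - ereal (C * \<eta> powr (2/3) * ln \<eta>))"
proof -
  have vh: "\<And>p. vh p \<ge> 0" using assms(1) by blast
  have v0: "v_zero vh \<ge> 0" unfolding v_zero_def by (rule infsum_nonneg) (simp add: vh)
  obtain C N where C: "C > 0" "N \<ge> 1"
    "\<And>\<eta>. \<eta> \<ge> N \<Longrightarrow> remainder_bound c0 (vh 0) (v_zero vh) \<eta> \<le> C * \<eta> powr (2/3) * ln \<eta>"
    using remainder_bound_eventually_le[OF assms(4,3) v0] by blast
  show ?thesis
  proof (intro exI conjI allI impI)
    fix \<eta> \<beta> \<mu> mt :: real and lam :: "nat \<Rightarrow> real" and \<psi> :: "nat \<Rightarrow> fvec"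
    assume "N \<le> \<eta>" and \<beta>: "c0 * \<eta> powr (-2/3) \<le> \<beta>" and "\<beta> \<le> \<eta> powr (-2/3) / c0"
      and \<mu>: "- (\<eta> powr (2/3)) / c0 \<le> \<mu>" "\<mu> \<le> 1 / c0"
      and chem: "is_eff_chem_pot vh \<eta> \<mu> \<beta> mt" and st: "is_state lam \<psi>"
    define x where "x = - mt"
    have "\<eta> > 0" using \<open>N \<le> \<eta>\<close> C(2) by simp
    have "\<beta> > 0" using \<beta> assms(4) \<open>\<eta> > 0\<close> by (smt (verit) mult_pos_pos powr_gt_zero)
    have "x > 0" using chem by (simp add: is_eff_chem_pot_def x_def)
    have occupation: "(\<Sum>\<^sub>\<infinity>p. 1 / (exp (\<beta> * (psq p + x)) - 1)) = (\<mu> + x) * \<eta> / vh 0"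
      using chem by (simp add: is_eff_chem_pot_def x_def)
    have "(\<mu> + x) * v_zero vh / (2 * vh 0) + (v_zero vh)^2 / (8 * \<eta> * vh 0)
        + 1 / \<beta> * - ln (1 - exp (- \<beta> * x)) \<le> C * \<eta> powr (2/3) * ln \<eta>"
      using remainder_le[OF assms(4,3) v0 \<open>\<eta> > 0\<close> \<open>\<beta> > 0\<close> \<beta> \<mu> \<open>x > 0\<close>]
        bose_occupation_ge_zero_mode[OF \<open>\<beta> > 0\<close> \<open>x > 0\<close>] bose_occupation_le[OF \<open>\<beta> > 0\<close> \<open>x > 0\<close>]
        C(3)[OF \<open>N \<le> \<eta>\<close>]
      unfolding occupation by linarith
    from order.trans[OF ereal_minus_mono[OF order.refl ereal_less_eq(3)[THEN iffD2, OF this]]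
        grand_pot_ge_ideal_gas_minus_remainder[of lam \<psi> vh, OF st vh assms(3) \<open>\<eta> > 0\<close> \<open>\<beta> > 0\<close> \<open>x > 0\<close>]]
    show "ereal (Phi_id_plus \<beta> mt - (\<mu> - mt)^2 * \<eta> / (2 * vh 0))
        + ereal (vh 0 / (2 * \<eta>)) *
            enn2ereal (num_sq_trace ((\<mu> - mt + v_zero vh / (2 * \<eta>)) * \<eta> / vh 0) lam \<psi>)
        - ereal (C * \<eta> powr (2/3) * ln \<eta>) \<le> grand_pot vh \<eta> \<mu> \<beta> lam \<psi>"
      by (simp add: x_def)
  qed (use C in auto)
qed

end
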